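(* Let $S$ be a semigroup with tight twisting $\Phi$ and $0$-twisted semigroup $T_\Phi^0$. Then for every $\mathcal{K}\in\{\mathcal{R},\mathcal{L},\mathcal{D},\mathcal{J},\mathcal{H}\}$, as relations on $T_\Phi^0$, $\mathcal{K}^{T_\Phi^0}=\mathcal{K}^{S}\cup\{(0,0)\}$.
   Context: Green's relations are the standard ones; a superscript indicates the semigroup in which they are computed. $\mathbb{N}=\{0,1,2,\dots\}$. A twisting of a semigroup $S$ is a map $\Phi:S\times S\to\mathbb{N}$ with $\Phi(a,b)+\Phi(ab,c)=\Phi(a,bc)+\Phi(b,c)$ for all $a,b,c\in S$. It is tight if (1) for all $a,b\in S$ there is $a'\in S$ with $ab=a'b$ and $\Phi(a',b)=0$, and (2) for all $a,b\in S$ there is $b'\in S$ with $ab=ab'$ and $\Phi(a,b')=0$. For $S=(X,\cdot)$ with twisting $\Phi$, the $0$-twisted semigroup is $T_\Phi^0=(X\sqcup\{0\},* )$ where $a*b=ab$ if $a,b\neq0$ and $\Phi(a,b)=0$, and $a*b=0$ otherwise. *)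

theory Defs
  imports Main
begin

text \<open>Green's relations for a semigroup given by its multiplication m on the whole type.
  Principal ideals are taken in S^1 (adjoin an identity).\<close>

definition princ_right :: "('b \<Rightarrow> 'b \<Rightarrow> 'b) \<Rightarrow> 'b \<Rightarrow> 'b set" where
  "princ_right m a = insert a (range (m a))"

definition princ_left :: "('b \<Rightarrow> 'b \<Rightarrow> 'b) \<Rightarrow> 'b \<Rightarrow> 'b set" where
  "princ_left m a = insert a (range (\<lambda>x. m x a))"

definition princ_two :: "('b \<Rightarrow> 'b \<Rightarrow> 'b) \<Rightarrow> 'b \<Rightarrow> 'b set" where
  "princ_two m a = insert a (range (m a) \<union> range (\<lambda>x. m x a) \<union> {m (m x a) y | x y. True})"

definition greenR :: "('b \<Rightarrow> 'b \<Rightarrow> 'b) \<Rightarrow> ('b \<times> 'b) set" where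
  "greenR m = {(a, b). princ_right m a = princ_right m b}"

definition greenL :: "('b \<Rightarrow> 'b \<Rightarrow> 'b) \<Rightarrow> ('b \<times> 'b) set" where
  "greenL m = {(a, b). princ_left m a = princ_left m b}"

definition greenJ :: "('b \<Rightarrow> 'b \<Rightarrow> 'b) \<Rightarrow> ('b \<times> 'b) set" where
  "greenJ m = {(a, b). princ_two m a = princ_two m b}"

definition greenD :: "('b \<Rightarrow> 'b \<Rightarrow> 'b) \<Rightarrow> ('b \<times> 'b) set" where
  "greenD m = greenR m O greenL m"

definition greenH :: "('b \<Rightarrow> 'b \<Rightarrow> 'b) \<Rightarrow> ('b \<times> 'b) set" where
  "greenH m = greenR m \<inter> greenL m"

definition twisting :: "('a::semigroup_mult \<Rightarrow> 'a \<Rightarrow> nat) \<Rightarrow> bool" where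
  "twisting \<Phi> \<longleftrightarrow> (\<forall>a b c. \<Phi> a b + \<Phi> (a * b) c = \<Phi> a (b * c) + \<Phi> b c)"

definition tight_twisting :: "('a::semigroup_mult \<Rightarrow> 'a \<Rightarrow> nat) \<Rightarrow> bool" where
  "tight_twisting \<Phi> \<longleftrightarrow> twisting \<Phi>
     \<and> (\<forall>a b. \<exists>a'. a * b = a' * b \<and> \<Phi> a' b = 0)
     \<and> (\<forall>a b. \<exists>b'. a * b = a * b' \<and> \<Phi> a b' = 0)"

text \<open>The 0-twisted semigroup on X \<union> {0}, modelled as 'a option with None = 0.\<close>

fun tw0_mult :: "('a::semigroup_mult \<Rightarrow> 'a \<Rightarrow> nat) \<Rightarrow> 'a option \<Rightarrow> 'a option \<Rightarrow> 'a option" where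
  "tw0_mult \<Phi> (Some a) (Some b) = (if \<Phi> a b = 0 then Some (a * b) else None)"
| "tw0_mult \<Phi> _ _ = None"

definition lift_rel :: "('a \<times> 'a) set \<Rightarrow> ('a option \<times> 'a option) set" where
  "lift_rel K = map_prod Some Some ` K \<union> {(None, None)}"

end

theory Submission
  imports Defs
begin

text \<open>By tightness, every product a b of S equals a product a' b, and a product a b', with vanishing
  twist, so it survives in the 0-twisted semigroup. Hence every principal one-sided or two-sided
  ideal of a nonzero element of the 0-twisted semigroup is the corresponding ideal of S with the
  zero added, while the principal ideal of zero is just the zero. Since R, L and J are defined by
  equality of principal ideals, they are lifted unchanged; D and H follow because lifting commutes
  with relational composition and intersection.\<close>

lemma insert_None_image_Some_eq_iff:
  "insert None (Some ` A) = insert None (Some ` B) \<longleftrightarrow> A = B"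
  by (auto simp: set_eq_iff)

lemma kernel_eq_lift_rel:
  fixes P :: "'a option \<Rightarrow> 'a option set" and Q :: "'a \<Rightarrow> 'a set"
  assumes P_None: "P None = {None}"
    and P_Some: "\<And>a. P (Some a) = insert None (Some ` Q a)"
    and mem_Q: "\<And>a. a \<in> Q a"
  shows "{(x, y). P x = P y} = lift_rel {(a, b). Q a = Q b}"
proof -
  have "P (Some a) \<noteq> P None" for a
    using mem_Q[of a] by (auto simp: P_None P_Some)
  then have "P x = P y \<longleftrightarrow> (x, y) \<in> lift_rel {(a, b). Q a = Q b}" for x y
    by (cases x; cases y) (auto simp: lift_rel_def P_Some insert_None_image_Some_eq_iff)
  then show ?thesis
    by auto
qed

lemma lift_rel_relcomp: "lift_rel A O lift_rel B = lift_rel (A O B)"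
  unfolding lift_rel_def by auto

lemma lift_rel_Int: "lift_rel A \<inter> lift_rel B = lift_rel (A \<inter> B)"
  unfolding lift_rel_def by auto

lemma tight_twistingD:
  assumes "tight_twisting \<Phi>"
  shows tight_twisting_left: "\<exists>a'. a * b = a' * b \<and> \<Phi> a' b = 0"
    and tight_twisting_right: "\<exists>b'. a * b = a * b' \<and> \<Phi> a b' = 0"
  using assms unfolding tight_twisting_def by blast+

lemma tw0_mult_None_right [simp]: "tw0_mult \<Phi> x None = None"
  by (cases x) simp_all

lemma tw0_mult_eq_SomeD:
  assumes "tw0_mult \<Phi> x y = Some c"
  shows "\<exists>a b. x = Some a \<and> y = Some b \<and> c = a * b"
  using assms by (cases x; cases y) (auto split: if_splits)

lemma right_multiples_tw0_mult_None: "range (tw0_mult \<Phi> None) = {None}"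
  by auto

lemma left_multiples_tw0_mult_None: "range (\<lambda>x. tw0_mult \<Phi> x None) = {None}"
  by auto

lemma right_multiples_tw0_mult_Some:
  assumes right: "\<And>a b. \<exists>b'. a * b = a * b' \<and> \<Phi> a b' = 0"
  shows "range (tw0_mult \<Phi> (Some a)) = insert None (Some ` range ((*) a))"
proof (rule equalityI)
  show "range (tw0_mult \<Phi> (Some a)) \<subseteq> insert None (Some ` range ((*) a))"
  proof (rule image_subsetI)
    show "tw0_mult \<Phi> (Some a) x \<in> insert None (Some ` range ((*) a))" for x
      by (cases "tw0_mult \<Phi> (Some a) x") (auto dest: tw0_mult_eq_SomeD)
  qed
  have "Some (a * b) \<in> range (tw0_mult \<Phi> (Some a))" for b
  proof -
    obtain b' where "a * b = a * b'" "\<Phi> a b' = 0"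
      using right by blast
    then have "Some (a * b) = tw0_mult \<Phi> (Some a) (Some b')"
      by simp
    then show ?thesis
      by blast
  qed
  moreover have "None \<in> range (tw0_mult \<Phi> (Some a))"
    by (metis rangeI tw0_mult_None_right)
  ultimately show "insert None (Some ` range ((*) a)) \<subseteq> range (tw0_mult \<Phi> (Some a))"
    by blast
qed

lemma left_multiples_tw0_mult_Some:
  assumes left: "\<And>a b. \<exists>a'. a * b = a' * b \<and> \<Phi> a' b = 0"
  shows "range (\<lambda>x. tw0_mult \<Phi> x (Some a)) = insert None (Some ` range (\<lambda>x. x * a))"
proof (rule equalityI)
  show "range (\<lambda>x. tw0_mult \<Phi> x (Some a)) \<subseteq> insert None (Some ` range (\<lambda>x. x * a))"
  proof (rule image_subsetI)
    show "tw0_mult \<Phi> x (Some a) \<in> insert None (Some ` range (\<lambda>x. x * a))" for x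
      by (cases "tw0_mult \<Phi> x (Some a)") (auto dest: tw0_mult_eq_SomeD)
  qed
  have "Some (b * a) \<in> range (\<lambda>x. tw0_mult \<Phi> x (Some a))" for b
  proof -
    obtain b' where "b * a = b' * a" "\<Phi> b' a = 0"
      using left by blast
    then have "Some (b * a) = tw0_mult \<Phi> (Some b') (Some a)"
      by simp
    then show ?thesis
      by blast
  qed
  moreover have "None \<in> range (\<lambda>x. tw0_mult \<Phi> x (Some a))"
    by (metis rangeI tw0_mult.simps(2))
  ultimately show "insert None (Some ` range (\<lambda>x. x * a)) \<subseteq> range (\<lambda>x. tw0_mult \<Phi> x (Some a))"
    by blast
qed

lemma two_sided_multiples_eq_UN:
  "{m (m x a) y | x y. True} = (\<Union>u \<in> range (\<lambda>x. m x a). range (m u))"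
  by auto

lemma two_sided_multiples_tw0_mult_Some:
  assumes left: "\<And>a b. \<exists>a'. a * b = a' * b \<and> \<Phi> a' b = 0"
    and right: "\<And>a b. \<exists>b'. a * b = a * b' \<and> \<Phi> a b' = 0"
  shows "{tw0_mult \<Phi> (tw0_mult \<Phi> x (Some a)) y | x y. True}
    = insert None (Some ` {x * a * y | x y. True})"
proof -
  have "{tw0_mult \<Phi> (tw0_mult \<Phi> x (Some a)) y | x y. True}
      = range (tw0_mult \<Phi> None) \<union> (\<Union>x. range (tw0_mult \<Phi> (Some (x * a))))"
    unfolding two_sided_multiples_eq_UN left_multiples_tw0_mult_Some[OF left] by auto
  also have "\<dots> = insert None (\<Union>x. Some ` range ((*) (x * a)))"
    by (simp add: right_multiples_tw0_mult_None right_multiples_tw0_mult_Some[OF right])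
  also have "\<dots> = insert None (Some ` {x * a * y | x y. True})"
    by auto
  finally show ?thesis .
qed

lemma mem_princ_self:
  shows mem_princ_right_self: "a \<in> princ_right m a"
    and mem_princ_left_self: "a \<in> princ_left m a"
    and mem_princ_two_self: "a \<in> princ_two m a"
  unfolding princ_right_def princ_left_def princ_two_def by simp_all

lemma princ_right_tw0_mult_None: "princ_right (tw0_mult \<Phi>) None = {None}"
  unfolding princ_right_def by (simp add: right_multiples_tw0_mult_None)

lemma princ_left_tw0_mult_None: "princ_left (tw0_mult \<Phi>) None = {None}"
  unfolding princ_left_def by (simp add: left_multiples_tw0_mult_None)

lemma princ_two_tw0_mult_None: "princ_two (tw0_mult \<Phi>) None = {None}"
  unfolding princ_two_def by auto

lemma princ_right_tw0_mult_Some: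
  assumes right: "\<And>a b. \<exists>b'. a * b = a * b' \<and> \<Phi> a b' = 0"
  shows "princ_right (tw0_mult \<Phi>) (Some a) = insert None (Some ` princ_right (*) a)"
  unfolding princ_right_def by (simp add: right_multiples_tw0_mult_Some[OF right] insert_commute)

lemma princ_left_tw0_mult_Some:
  assumes left: "\<And>a b. \<exists>a'. a * b = a' * b \<and> \<Phi> a' b = 0"
  shows "princ_left (tw0_mult \<Phi>) (Some a) = insert None (Some ` princ_left (*) a)"
  unfolding princ_left_def by (simp add: left_multiples_tw0_mult_Some[OF left] insert_commute)

lemma princ_two_tw0_mult_Some:
  assumes left: "\<And>a b. \<exists>a'. a * b = a' * b \<and> \<Phi> a' b = 0"
    and right: "\<And>a b. \<exists>b'. a * b = a * b' \<and> \<Phi> a b' = 0"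
  shows "princ_two (tw0_mult \<Phi>) (Some a) = insert None (Some ` princ_two (*) a)"
  unfolding princ_two_def right_multiples_tw0_mult_Some[OF right] left_multiples_tw0_mult_Some[OF left]
    two_sided_multiples_tw0_mult_Some[OF left right]
  by auto

theorem mainTheorem3:
  fixes \<Phi> :: "'a::semigroup_mult \<Rightarrow> 'a \<Rightarrow> nat"
  assumes "tight_twisting \<Phi>"
  shows "greenR (tw0_mult \<Phi>) = lift_rel (greenR (*))
       \<and> greenL (tw0_mult \<Phi>) = lift_rel (greenL (*))
       \<and> greenD (tw0_mult \<Phi>) = lift_rel (greenD (*))
       \<and> greenJ (tw0_mult \<Phi>) = lift_rel (greenJ (*))
       \<and> greenH (tw0_mult \<Phi>) = lift_rel (greenH (*))"
proof -
  note left = tight_twisting_left[OF assms] and right = tight_twisting_right[OF assms]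
  have R: "greenR (tw0_mult \<Phi>) = lift_rel (greenR (*))"
    unfolding greenR_def
    by (rule kernel_eq_lift_rel[OF princ_right_tw0_mult_None
        princ_right_tw0_mult_Some[OF right] mem_princ_right_self])
  have L: "greenL (tw0_mult \<Phi>) = lift_rel (greenL (*))"
    unfolding greenL_def
    by (rule kernel_eq_lift_rel[OF princ_left_tw0_mult_None
        princ_left_tw0_mult_Some[OF left] mem_princ_left_self])
  have J: "greenJ (tw0_mult \<Phi>) = lift_rel (greenJ (*))"
    unfolding greenJ_def
    by (rule kernel_eq_lift_rel[OF princ_two_tw0_mult_None
        princ_two_tw0_mult_Some[OF left right] mem_princ_two_self])
  have D: "greenD (tw0_mult \<Phi>) = lift_rel (greenD (*))"
    unfolding greenD_def R L lift_rel_relcomp ..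
  have H: "greenH (tw0_mult \<Phi>) = lift_rel (greenH (*))"
    unfolding greenH_def R L lift_rel_Int ..
  show ?thesis
    using R L D J H by blast
qed

end
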